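(* Let $(X,\mathcal A,\mathbb P)$ be a probability space with relations $\le_k$, $k\in[m]$, as in the context, let $N\ge m$ and $\alpha\in[0,1]$. Suppose there exist real-valued random variables $\tau_k$, $k\in[m]$, on $(X,\mathcal A,\mathbb P)$ such that for all $x,y\in X$, $\tau_k(x)\le\tau_k(y)$ implies $x\le_ky$. Then \[\mathbb P^N\{\mathbf x\in X^N:\mathfrak D(\mathbf x)<1-\alpha\}\le\sum_{k=0}^{m-1}\binom{N}{k}\alpha^k(1-\alpha)^{N-k}.\]
   Context: $(X,\mathcal A,\mathbb P)$ is a probability space, $m\in\mathbb N$, $[m]=\{1,\dots,m\}$. For each $k\in[m]$, $\le_k$ is a reflexive, transitive, total relation on $X$ (antisymmetry not required); $x=_ky$ means $x\le_ky$ and $y\le_kx$; $\mathcal A$ contains $\{y:y=_kx\}$ and $\{y:y\le_kx\}$ for all $x,k$. $\mathbb P^N$ is the completion of the product measure on $X^N$. For $\mathbf x=(x_1,\dots,x_N)\in X^N$, $h_k(\mathbf x)$ is an entry $y$ of $\mathbf x$ with $y\le_kx_i$ for all $i$, and $\mathfrak D(\mathbf x)=\mathbb P\{x\in X:h_k(\mathbf x)\le_kx\text{ for all }k\in[m]\}$. *)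

theory Defs
  imports "HOL-Probability.Probability"
begin

text \<open>A tuple in X^N is represented as a function xs :: nat => 'a on the index set {..<N}.
  le k is the relation \<le>_k.  minent le k N xs is h_k(xs): an entry of xs that is
  \<le>_k-below all entries (chosen by Hilbert choice; the value of D does not depend on the choice).\<close>

definition minent :: "(nat \<Rightarrow> 'a \<Rightarrow> 'a \<Rightarrow> bool) \<Rightarrow> nat \<Rightarrow> nat \<Rightarrow> (nat \<Rightarrow> 'a) \<Rightarrow> 'a" where
  "minent le k N xs = (SOME y. y \<in> xs ` {..<N} \<and> (\<forall>i<N. le k y (xs i)))"

definition depthD :: "'a measure \<Rightarrow> (nat \<Rightarrow> 'a \<Rightarrow> 'a \<Rightarrow> bool) \<Rightarrow> nat \<Rightarrow> nat \<Rightarrow> (nat \<Rightarrow> 'a) \<Rightarrow> real" where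
  "depthD M le m N xs = measure M {x \<in> space M. \<forall>k\<in>{1..m}. le k (minent le k N xs) x}"

end

theory Submission
  imports Defs
begin

(* A point outside the depth region of a sample x_1, ..., x_N lies strictly below every x_i with
   respect to some tau_k, so it suffices to bound the probability that the set of such points has
   mass greater than alpha. Ties among the tau_k are broken by passing to X x [0, 1] with atomless
   scores s_k, randomised probability integral transforms of the tau_k that are monotone in tau_k.
   For atomless scores we induct on the number of scores: the sample is covered by the events
   "x_j minimises s_1"; given x_j = a, the other N - 1 points lie above a, where the remaining
   scores must exceed the rescaled level (alpha b - g) / (b - g), g being the mass below a.
   As g is uniform on [0, b], integrating the inductive bound over g and summing over j gives
   b^N times the binomial tail. *)

section \<open>Binomial tails as integrals\<close>

definition binomial_lower_tail :: "nat \<Rightarrow> nat \<Rightarrow> real \<Rightarrow> real" where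
  "binomial_lower_tail n m p = (\<Sum>k = 0..<m. real (n choose k) * p ^ k * (1 - p) ^ (n - k))"

lemma has_integral_power_diff:
  fixes a c :: real
  assumes "a \<le> c"
  shows "((\<lambda>g. (c - g) ^ j) has_integral (c - a) ^ Suc j / Suc j) {a..c}"
proof -
  have power_deriv: "((\<lambda>g. (c - g) ^ Suc j) has_real_derivative real (Suc j) * (c - x) ^ j * (0 - 1))
      (at x within {a..c})" for x
    by (intro derivative_eq_intros) auto
  have "((\<lambda>g. - ((c - g) ^ Suc j / Suc j)) has_real_derivative (c - x) ^ j) (at x within {a..c})"
    for x
    using DERIV_minus[OF DERIV_cdivide[OF power_deriv[of x], where c="real (Suc j)"]]
    by (simp del: of_nat_Suc power_Suc)
  from fundamental_theorem_of_calculus[OF assms this[unfolded has_real_derivative_iff_has_vector_derivative]]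
  show ?thesis by simp
qed

lemma nn_integral_power_diff:
  fixes a c :: real
  assumes "a \<le> c"
  shows "(\<integral>\<^sup>+ g. indicator {a..c} g * ennreal ((c - g) ^ j) \<partial>lborel) = ennreal ((c - a) ^ Suc j / Suc j)"
  using nn_integral_has_integral_lebesgue'[OF _ has_integral_power_diff[OF assms]]
  by (simp add: mult.commute)

lemma binomial_lower_tail_rescaled:
  fixes a c g :: real
  assumes "g \<noteq> c"
  shows "(c - g) ^ n * binomial_lower_tail n m ((a - g) / (c - g))
       = (\<Sum>j<m. real (n choose j) * (c - a) ^ (n - j) * (a - g) ^ j)"
  unfolding binomial_lower_tail_def sum_distrib_left atLeast0LessThan
proof (rule sum.cong[OF refl])
  fix j
  have "1 - (a - g) / (c - g) = (c - a) / (c - g)"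
    using assms by (simp add: field_simps)
  moreover have "(c - g) ^ n = (c - g) ^ j * (c - g) ^ (n - j)" if "j \<le> n"
    using that by (simp flip: power_add)
  ultimately show "(c - g) ^ n * (real (n choose j) * ((a - g) / (c - g)) ^ j * (1 - (a - g) / (c - g)) ^ (n - j))
      = real (n choose j) * (c - a) ^ (n - j) * (a - g) ^ j"
    using assms by (cases "j \<le> n") (simp_all add: field_simps)
qed

text \<open>The bracket on the right is the integral of \<open>\<Sum>j<m. (n choose j) q^(n-j) (p - g)^j\<close> over
  \<open>[0, p]\<close> plus that of \<open>(p + q - g)^n\<close> over \<open>[p, p + q]\<close>.\<close>

lemma binomial_sum_Suc_eq_integrated:
  fixes p q :: real
  shows "(\<Sum>k<Suc m. real (Suc n choose k) * p ^ k * q ^ (Suc n - k))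
       = real (Suc n) * ((\<Sum>j<m. real (n choose j) * q ^ (n - j) * (p ^ Suc j / Suc j)) + q ^ Suc n / Suc n)"
proof -
  have "real (Suc n choose Suc j) * p ^ Suc j * q ^ (Suc n - Suc j)
      = real (Suc n) * (real (n choose j) * q ^ (n - j) * (p ^ Suc j / Suc j))" for j
  proof -
    have "real (Suc j) * real (Suc n choose Suc j) = real (Suc n) * real (n choose j)"
      using Suc_times_binomial[of j n] by (metis of_nat_mult)
    then show ?thesis
      by (simp add: field_simps del: of_nat_Suc binomial_Suc_Suc)
  qed
  then show ?thesis
    by (simp add: lessThan_Suc_eq_insert_0 sum.reindex sum_distrib_left distrib_left)
qed

lemma binomial_lower_tail_homogeneous:
  fixes b p :: real
  shows "b ^ n * binomial_lower_tail n m p = (\<Sum>k<m. real (n choose k) * (p * b) ^ k * (b - p * b) ^ (n - k))"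
  unfolding binomial_lower_tail_def sum_distrib_left atLeast0LessThan
proof (rule sum.cong[OF refl])
  fix k
  have "b ^ n = b ^ k * b ^ (n - k)" if "k \<le> n"
    using that by (simp flip: power_add)
  moreover have "b - p * b = (1 - p) * b"
    by algebra
  ultimately show "b ^ n * (real (n choose k) * p ^ k * (1 - p) ^ (n - k))
      = real (n choose k) * (p * b) ^ k * (b - p * b) ^ (n - k)"
    by (cases "k \<le> n") (simp_all add: power_mult_distrib)
qed

text \<open>If the minimum of the first score is attained at a point whose lower set has mass \<open>g\<close>, the
  other \<open>n\<close> sample points lie in a set of mass \<open>b - g\<close>, and the level \<open>\<alpha> b\<close> is lowered by \<open>g\<close>.\<close>

definition conditional_tail_bound :: "nat \<Rightarrow> nat \<Rightarrow> real \<Rightarrow> real \<Rightarrow> real \<Rightarrow> real" where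
  "conditional_tail_bound n m \<alpha> b g =
     (if g < \<alpha> * b then (b - g) ^ n * binomial_lower_tail n m ((\<alpha> * b - g) / (b - g)) else (b - g) ^ n)"

lemma conditional_tail_bound_below_level:
  assumes "g < \<alpha> * b" "\<alpha> * b \<le> b"
  shows "conditional_tail_bound n m \<alpha> b g = (\<Sum>j<m. real (n choose j) * (b - \<alpha> * b) ^ (n - j) * (\<alpha> * b - g) ^ j)"
  using assms binomial_lower_tail_rescaled[of g b n m "\<alpha> * b"] by (simp add: conditional_tail_bound_def)

lemma nn_integral_binomial_polynomial:
  fixes p q :: real
  assumes "0 \<le> p" "0 \<le> q"
  shows "(\<integral>\<^sup>+ g. indicator {0..p} g * ennreal (\<Sum>j<m. real (n choose j) * q ^ (n - j) * (p - g) ^ j) \<partial>lborel)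
       = ennreal (\<Sum>j<m. real (n choose j) * q ^ (n - j) * (p ^ Suc j / Suc j))"
proof -
  have "((\<lambda>g. \<Sum>j<m. real (n choose j) * q ^ (n - j) * (p - g) ^ j)
      has_integral (\<Sum>j<m. real (n choose j) * q ^ (n - j) * ((p - 0) ^ Suc j / Suc j))) {0..p}"
    by (intro has_integral_sum has_integral_mult_right has_integral_power_diff assms) auto
  from nn_integral_has_integral_lebesgue'[OF _ this] assms show ?thesis
    by (simp add: mult.commute sum_nonneg)
qed

lemma nn_integral_conditional_tail_bound:
  fixes b \<alpha> :: real
  assumes "0 \<le> b" "0 \<le> \<alpha>" "\<alpha> \<le> 1"
  shows "ennreal (Suc n) * (\<integral>\<^sup>+ g. indicator {0..b} g * ennreal (conditional_tail_bound n m \<alpha> b g) \<partial>lborel)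
       = ennreal (b ^ Suc n * binomial_lower_tail (Suc n) (Suc m) \<alpha>)"
proof -
  define q where "q = b - \<alpha> * b"
  define P where "P g = (\<Sum>j<m. real (n choose j) * q ^ (n - j) * (\<alpha> * b - g) ^ j)" for g
  have ab: "0 \<le> \<alpha> * b" "\<alpha> * b \<le> b"
    using assms by (auto intro: mult_left_le_one_le)
  then have "0 \<le> q"
    by (simp add: q_def)
  have "AE g in lborel. indicator {0..b} g * ennreal (conditional_tail_bound n m \<alpha> b g)
      = indicator {0..\<alpha> * b} g * ennreal (P g) + indicator {\<alpha> * b..b} g * ennreal ((b - g) ^ n)"
    using AE_lborel_singleton[of "\<alpha> * b"]
  proof eventually_elim
    case (elim g)
    show ?case
    proof (cases "g < \<alpha> * b")
      case True
      with elim ab show ?thesis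
        by (auto simp: indicator_def conditional_tail_bound_below_level P_def q_def)
    next
      case False
      with elim ab show ?thesis
        by (auto simp: indicator_def conditional_tail_bound_def)
    qed
  qed
  then have "(\<integral>\<^sup>+ g. indicator {0..b} g * ennreal (conditional_tail_bound n m \<alpha> b g) \<partial>lborel)
      = (\<integral>\<^sup>+ g. indicator {0..\<alpha> * b} g * ennreal (P g) \<partial>lborel)
        + (\<integral>\<^sup>+ g. indicator {\<alpha> * b..b} g * ennreal ((b - g) ^ n) \<partial>lborel)"
    by (simp add: nn_integral_cong_AE nn_integral_add P_def)
  also have "\<dots> = ennreal (\<Sum>j<m. real (n choose j) * q ^ (n - j) * ((\<alpha> * b) ^ Suc j / Suc j))
      + ennreal (q ^ Suc n / Suc n)"
    unfolding P_def q_def using ab \<open>0 \<le> q\<close>[unfolded q_def]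
    by (simp add: nn_integral_binomial_polynomial nn_integral_power_diff)
  finally have "ennreal (Suc n) * (\<integral>\<^sup>+ g. indicator {0..b} g * ennreal (conditional_tail_bound n m \<alpha> b g) \<partial>lborel)
      = ennreal (real (Suc n) * ((\<Sum>j<m. real (n choose j) * q ^ (n - j) * ((\<alpha> * b) ^ Suc j / Suc j))
          + q ^ Suc n / Suc n))"
    using ab \<open>0 \<le> q\<close> by (simp add: ennreal_mult' sum_nonneg del: of_nat_Suc)
  also have "\<dots> = ennreal (b ^ Suc n * binomial_lower_tail (Suc n) (Suc m) \<alpha>)"
    unfolding binomial_sum_Suc_eq_integrated[symmetric] binomial_lower_tail_homogeneous q_def
    by (simp add: mult.commute)
  finally show ?thesis .
qed

section \<open>The probability integral transform\<close>

lemma (in finite_borel_measure) cdf_sublevel_set_eq_atMost: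
  assumes atomless: "\<And>x. measure M {x} = 0"
    and "cdf M r\<^sub>0 \<le> x" and "x < measure M (space M)"
  obtains r where "{r. cdf M r \<le> x} = {..r}" and "cdf M r = x"
proof -
  let ?S = "{r. cdf M r \<le> x}"
  have cont: "isCont (cdf M) r" for r
    using isCont_cdf atomless by simp
  have "eventually (\<lambda>r. x < cdf M r) at_top"
    using cdf_lim_at_top order_tendstoD(1) assms(3) by fastforce
  then obtain r\<^sub>1 where r\<^sub>1: "\<And>r. r \<ge> r\<^sub>1 \<Longrightarrow> x < cdf M r"
    by (auto simp: eventually_at_top_linorder)
  have bdd: "bdd_above ?S"
  proof (rule bdd_aboveI)
    show "r \<le> r\<^sub>1" if "r \<in> ?S" for r
      using that r\<^sub>1[of r] by (cases "r \<le> r\<^sub>1") auto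
  qed
  have "closed ?S"
    by (rule closed_Collect_le) (auto intro!: continuous_at_imp_continuous_on cont)
  then have Sup_in: "Sup ?S \<in> ?S"
    using closed_contains_Sup[OF _ bdd] assms(2) by blast
  have "?S = {..Sup ?S}"
    using cSup_upper[OF _ bdd] Sup_in cdf_nondecreasing by (auto intro: order_trans)
  moreover have "cdf M (Sup ?S) = x"
  proof -
    have "Sup ?S \<le> r\<^sub>1"
      by (rule ccontr) (use r\<^sub>1[of "Sup ?S"] Sup_in in auto)
    then obtain r' where "Sup ?S \<le> r'" "cdf M r' = x"
      using IVT[of "cdf M" "Sup ?S" x r\<^sub>1] cont Sup_in r\<^sub>1[of r\<^sub>1] by auto
    then show ?thesis
      using cSup_upper[OF _ bdd, of r'] by (simp add: antisym)
  qed
  ultimately show ?thesis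
    using that by blast
qed

lemma (in finite_borel_measure) measure_cdf_sublevel_set:
  assumes atomless: "\<And>x. measure M {x} = 0"
  shows "measure M {r. cdf M r \<le> x} = max 0 (min x (measure M (space M)))"
proof (cases "x < measure M (space M)")
  case True
  show ?thesis
  proof (cases "\<exists>r. cdf M r \<le> x")
    case True
    then obtain r where "{r. cdf M r \<le> x} = {..r}" "cdf M r = x"
      using cdf_sublevel_set_eq_atMost[OF atomless] \<open>x < measure M (space M)\<close> by blast
    then show ?thesis
      using cdf_nonneg[of r] \<open>x < measure M (space M)\<close> by (simp add: cdf_def)
  next
    case False
    have "x \<le> 0"
    proof (rule ccontr)
      assume "\<not> x \<le> 0"
      then have "eventually (\<lambda>r. cdf M r < x) at_bot"
        using cdf_lim_at_bot order_tendstoD(2) by fastforce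
      then obtain r where "cdf M r < x"
        by (auto simp: eventually_at_bot_linorder)
      with False show False
        by (auto dest: less_imp_le)
    qed
    with False show ?thesis
      by (simp add: max_def min_def order_trans[OF _ measure_nonneg])
  qed
next
  case False
  then have "{r. cdf M r \<le> x} = space M"
    using cdf_bounded borel_UNIV by (force intro: order_trans)
  with False show ?thesis
    by (simp add: max_def min_def)
qed

lemma emeasure_lborel_Icc_Int_greaterThan:
  fixes b x :: real
  assumes "0 \<le> b"
  shows "emeasure lborel ({0..b} \<inter> {x<..}) = ennreal (b - max 0 (min x b))"
proof -
  consider "x < 0" | "0 \<le> x" "x < b" | "b \<le> x"
    by linarith
  then show ?thesis
  proof cases
    case 1
    then have "{0..b} \<inter> {x<..} = {0..b}" by auto
    with 1 assms show ?thesis by simp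
  next
    case 2
    then have "{0..b} \<inter> {x<..} = {x<..b}" by auto
    with 2 show ?thesis by simp
  next
    case 3
    then have "{0..b} \<inter> {x<..} = {}" by auto
    with 3 assms show ?thesis by (simp add: max_def min_def)
  qed
qed

lemma (in finite_borel_measure) distr_cdf_eq_lborel_restricted:
  assumes atomless: "\<And>x. measure M {x} = 0"
  shows "distr M borel (cdf M) = density lborel (indicator {0..measure M (space M)})"
proof (rule measure_eqI_lessThan)
  let ?b = "measure M (space M)"
  have [measurable]: "cdf M \<in> borel_measurable M"
    using borel_measurable_mono[of "cdf M"] cdf_nondecreasing
    by (simp add: measurable_cong_sets[OF M_is_borel refl] monoI)
  have distr_eq: "emeasure (distr M borel (cdf M)) {x<..} = ennreal (?b - max 0 (min x ?b))" for x
  proof -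
    have "{r \<in> space M. cdf M r \<le> x} \<in> sets M"
      by measurable
    then have "{r. cdf M r \<le> x} \<in> sets M"
      using borel_UNIV by simp
    moreover have "cdf M -` {x<..} \<inter> space M = space M - {r. cdf M r \<le> x}"
      using borel_UNIV by auto
    ultimately show ?thesis
      by (simp add: emeasure_distr emeasure_eq_measure finite_measure_compl
          measure_cdf_sublevel_set[OF atomless])
  qed
  show "emeasure (distr M borel (cdf M)) {x<..} < \<infinity>" for x
    unfolding distr_eq by simp
  show "emeasure (distr M borel (cdf M)) {x<..} = emeasure (density lborel (indicator {0..?b})) {x<..}"
    for x
  proof -
    have "emeasure (density lborel (indicator {0..?b})) {x<..} = emeasure lborel ({0..?b} \<inter> {x<..})"
      by (rule emeasure_restricted) auto
    also have "\<dots> = ennreal (?b - max 0 (min x ?b))"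
      by (simp add: emeasure_lborel_Icc_Int_greaterThan)
    finally show ?thesis
      by (simp add: distr_eq)
  qed
qed simp_all

lemma emeasure_distr_restricted:
  assumes "B \<in> sets \<nu>" "s \<in> borel_measurable \<nu>" "A \<in> sets borel"
  shows "emeasure (distr (density \<nu> (indicator B)) borel s) A = emeasure \<nu> ({y\<in>space \<nu>. s y \<in> A} \<inter> B)"
proof -
  have "emeasure (distr (density \<nu> (indicator B)) borel s) A = emeasure \<nu> (B \<inter> (s -` A \<inter> space \<nu>))"
    using assms by (simp add: emeasure_distr emeasure_restricted)
  also have "B \<inter> (s -` A \<inter> space \<nu>) = {y\<in>space \<nu>. s y \<in> A} \<inter> B"
    by auto
  finally show ?thesis .
qed

lemma nn_integral_cdf_transform:
  fixes \<nu> :: "'b measure" and s :: "'b \<Rightarrow> real" and \<phi> :: "real \<Rightarrow> ennreal"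
  assumes "finite_measure \<nu>" and B[measurable]: "B \<in> sets \<nu>" and [measurable]: "s \<in> borel_measurable \<nu>"
    and atomless: "\<And>t. emeasure \<nu> {y\<in>space \<nu>. s y = t} = 0"
    and [measurable]: "\<phi> \<in> borel_measurable borel"
  shows "(\<integral>\<^sup>+ a. indicator B a * \<phi> (measure \<nu> {y\<in>space \<nu>. y \<in> B \<and> s y \<le> s a}) \<partial>\<nu>)
       = (\<integral>\<^sup>+ g. indicator {0..measure \<nu> B} g * \<phi> g \<partial>lborel)"
proof -
  interpret finite_measure \<nu> by fact
  define \<mu> where "\<mu> = distr (density \<nu> (indicator B)) borel s"
  have emeasure_\<mu>: "emeasure \<mu> A = emeasure \<nu> ({y\<in>space \<nu>. s y \<in> A} \<inter> B)" if "A \<in> sets borel" for A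
    unfolding \<mu>_def using that by (simp add: emeasure_distr_restricted)
  then have measure_\<mu>: "measure \<mu> A = measure \<nu> ({y\<in>space \<nu>. s y \<in> A} \<inter> B)" if "A \<in> sets borel" for A
    using that by (simp add: measure_def)
  have "finite_measure \<mu>"
    using emeasure_\<mu>[of UNIV] by (intro finite_measureI) (simp add: \<mu>_def emeasure_eq_measure)
  then interpret \<mu>: finite_borel_measure \<mu>
    by (simp add: finite_borel_measure_def finite_borel_measure_axioms_def \<mu>_def)
  have "measure \<mu> {t} \<le> measure \<nu> {y\<in>space \<nu>. s y = t}" for t
    unfolding measure_\<mu>[OF borel_singleton[OF sets.empty_sets]] by (rule finite_measure_mono) auto
  then have atomless_\<mu>: "measure \<mu> {t} = 0" for t
    using atomless by (simp add: measure_def antisym)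
  have cdf_\<mu>: "cdf \<mu> t = measure \<nu> {y\<in>space \<nu>. y \<in> B \<and> s y \<le> t}" for t
    unfolding cdf_def measure_\<mu>[OF atMost_borel] by (rule arg_cong[where f="measure \<nu>"]) auto
  have total_\<mu>: "measure \<mu> (space \<mu>) = measure \<nu> B"
    using measure_\<mu>[of UNIV] \<mu>.borel_UNIV by (simp add: Int_absorb1 sets.sets_into_space)
  have [measurable]: "cdf \<mu> \<in> borel_measurable borel" "cdf \<mu> \<in> borel_measurable \<mu>"
    using borel_measurable_mono[of "cdf \<mu>"] \<mu>.cdf_nondecreasing
    by (simp_all add: monoI measurable_cong_sets[OF \<mu>.M_is_borel refl])
  have "(\<integral>\<^sup>+ a. indicator B a * \<phi> (measure \<nu> {y\<in>space \<nu>. y \<in> B \<and> s y \<le> s a}) \<partial>\<nu>)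
      = (\<integral>\<^sup>+ a. \<phi> (cdf \<mu> (s a)) \<partial>density \<nu> (indicator B))"
    by (simp add: cdf_\<mu> nn_integral_density)
  also have "\<dots> = (\<integral>\<^sup>+ r. \<phi> (cdf \<mu> r) \<partial>\<mu>)"
    by (rule nn_integral_distr[of s "density \<nu> (indicator B)" borel "\<lambda>r. \<phi> (cdf \<mu> r)", folded \<mu>_def, symmetric]) simp_all
  also have "\<dots> = (\<integral>\<^sup>+ g. \<phi> g \<partial>distr \<mu> borel (cdf \<mu>))"
    by (simp add: nn_integral_distr)
  also have "\<dots> = (\<integral>\<^sup>+ g. indicator {0..measure \<nu> B} g * \<phi> g \<partial>lborel)"
    by (simp add: \<mu>.distr_cdf_eq_lborel_restricted[OF atomless_\<mu>] total_\<mu> nn_integral_density)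
  finally show ?thesis .
qed

section \<open>Lower regions of atomless scores\<close>

lemma (in sigma_finite_measure) borel_measurable_measure_Collect:
  assumes "Measurable.pred (N \<Otimes>\<^sub>M M) (\<lambda>p. P (fst p) (snd p))"
  shows "(\<lambda>x. measure M {y \<in> space M. P x y}) \<in> borel_measurable N"
proof (rule measurable_measure)
  have "{p \<in> space (N \<Otimes>\<^sub>M M). snd p \<in> {y \<in> space M. P (fst p) y}} = {p \<in> space (N \<Otimes>\<^sub>M M). P (fst p) (snd p)}"
    by (auto simp: space_pair_measure)
  with assms show "{p \<in> space (N \<Otimes>\<^sub>M M). snd p \<in> {y \<in> space M. P (fst p) y}} \<in> sets (N \<Otimes>\<^sub>M M)"
    by (simp add: pred_def)
qed auto

lemma nn_integral_indicator_comp_le_emeasure: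
  assumes "S \<in> sets M" and "\<And>x. x \<in> space M \<Longrightarrow> f x \<in> E \<Longrightarrow> x \<in> S"
  shows "(\<integral>\<^sup>+ x. indicator E (f x) \<partial>M) \<le> emeasure M S"
proof -
  have "(\<integral>\<^sup>+ x. indicator E (f x) \<partial>M) \<le> (\<integral>\<^sup>+ x. indicator S x \<partial>M)"
    using assms(2) by (intro nn_integral_mono) (auto simp: indicator_def)
  with assms(1) show ?thesis
    by simp
qed

locale finite_measure_scores = finite_measure \<nu> for \<nu> :: "'b measure" +
  fixes s :: "nat \<Rightarrow> 'b \<Rightarrow> real"
  assumes measurable_score: "\<And>k. s k \<in> borel_measurable \<nu>"
begin

declare measurable_score[measurable]

sublocale product: product_sigma_finite "\<lambda>_. \<nu>"
  by (simp add: product_sigma_finite_def sigma_finite_measure_axioms)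

definition lower_region :: "nat set \<Rightarrow> nat set \<Rightarrow> (nat \<Rightarrow> 'b) \<Rightarrow> 'b set" where
  "lower_region K I x = {y \<in> space \<nu>. \<exists>k\<in>K. \<forall>i\<in>I. s k y \<le> s k (x i)}"

definition exceedance_set :: "nat set \<Rightarrow> nat set \<Rightarrow> 'b set \<Rightarrow> real \<Rightarrow> (nat \<Rightarrow> 'b) set" where
  "exceedance_set K I B \<alpha> = {x \<in> space (PiM I (\<lambda>_. \<nu>)).
     (\<forall>i\<in>I. x i \<in> B) \<and> \<alpha> * measure \<nu> B < measure \<nu> (lower_region K I x \<inter> B)}"

lemma sets_lower_region [measurable]:
  "finite K \<Longrightarrow> finite I \<Longrightarrow> lower_region K I x \<in> sets \<nu>"
  unfolding lower_region_def by measurable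

lemma measurable_measure_lower_region [measurable]:
  assumes "finite K" "finite I" and [measurable]: "B \<in> sets \<nu>"
  shows "(\<lambda>x. measure \<nu> (lower_region K I x \<inter> B)) \<in> borel_measurable (PiM I (\<lambda>_. \<nu>))"
proof -
  have "Measurable.pred (PiM I (\<lambda>_. \<nu>) \<Otimes>\<^sub>M \<nu>)
      (\<lambda>p. (\<exists>k\<in>K. \<forall>i\<in>I. s k (snd p) \<le> s k (fst p i)) \<and> snd p \<in> B)"
    using assms(1,2) by measurable
  moreover have "lower_region K I x \<inter> B = {y \<in> space \<nu>. (\<exists>k\<in>K. \<forall>i\<in>I. s k y \<le> s k (x i)) \<and> y \<in> B}"
    for x
    by (auto simp: lower_region_def)
  ultimately show ?thesis
    by (simp add: borel_measurable_measure_Collect)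
qed

lemma sets_exceedance_set [measurable]:
  assumes "finite K" "finite I" "B \<in> sets \<nu>"
  shows "exceedance_set K I B \<alpha> \<in> sets (PiM I (\<lambda>_. \<nu>))"
  using assms unfolding exceedance_set_def by measurable

lemma exceedance_set_empty: "0 \<le> \<alpha> \<Longrightarrow> exceedance_set {} I B \<alpha> = {}"
  by (auto simp: exceedance_set_def lower_region_def not_less)

lemma measure_upper_set:
  assumes "emeasure \<nu> {y\<in>space \<nu>. s k y = c} = 0" and [measurable]: "B \<in> sets \<nu>"
  shows "measure \<nu> {y\<in>space \<nu>. y \<in> B \<and> c \<le> s k y}
       = measure \<nu> B - measure \<nu> {y\<in>space \<nu>. y \<in> B \<and> s k y \<le> c}"
proof -
  have "AE y in \<nu>. s k y \<noteq> c"
    using assms(1) by (intro AE_I'[of "{y\<in>space \<nu>. s k y = c}"]) auto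
  then have "measure \<nu> {y\<in>space \<nu>. y \<in> B \<and> s k y \<le> c} = measure \<nu> {y\<in>space \<nu>. y \<in> B \<and> s k y < c}"
    by (intro measure_eq_AE) auto
  moreover have "{y\<in>space \<nu>. y \<in> B \<and> c \<le> s k y} = B - {y\<in>space \<nu>. y \<in> B \<and> s k y < c}"
    using sets.sets_into_space[of B \<nu>] by auto
  moreover have "{y\<in>space \<nu>. y \<in> B \<and> s k y < c} \<in> sets \<nu>"
    by measurable
  then have "measure \<nu> (B - {y\<in>space \<nu>. y \<in> B \<and> s k y < c})
      = measure \<nu> B - measure \<nu> {y\<in>space \<nu>. y \<in> B \<and> s k y < c}"
    by (intro measure_Diff) auto
  ultimately show ?thesis
    by simp
qed

text \<open>Points of the lower region below \<open>s k a\<close> are charged to score \<open>k\<close>; any other point lies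
  in the upper set \<open>U\<close> and in the lower region of the remaining scores and sample points.\<close>

lemma exceedance_set_section:
  assumes "finite K'" "finite J" "j \<notin> J" and [measurable]: "B \<in> sets \<nu>"
    and x: "x'(j := a) \<in> {x \<in> exceedance_set (insert k K') (insert j J) B \<alpha>. \<forall>i\<in>insert j J. s k (x j) \<le> s k (x i)}"
  defines "U \<equiv> {y\<in>space \<nu>. y \<in> B \<and> s k a \<le> s k y}"
    and "g \<equiv> measure \<nu> {y\<in>space \<nu>. y \<in> B \<and> s k y \<le> s k a}"
  shows "a \<in> B" and "\<forall>i\<in>J. x' i \<in> U" and "\<alpha> * measure \<nu> B - g < measure \<nu> (lower_region K' J x' \<inter> U)"
proof -
  have in_B: "\<forall>i\<in>insert j J. (x'(j := a)) i \<in> B"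
    and min: "\<forall>i\<in>J. s k a \<le> s k (x' i)"
    and exceeds: "\<alpha> * measure \<nu> B < measure \<nu> (lower_region (insert k K') (insert j J) (x'(j := a)) \<inter> B)"
    using x \<open>j \<notin> J\<close> by (auto simp: exceedance_set_def split: if_splits)
  then show "a \<in> B"
    by simp
  show "\<forall>i\<in>J. x' i \<in> U"
    using in_B min \<open>j \<notin> J\<close> sets.sets_into_space[of B \<nu>] by (auto simp: U_def split: if_splits)
  have "lower_region (insert k K') (insert j J) (x'(j := a)) \<inter> B
      \<subseteq> {y\<in>space \<nu>. y \<in> B \<and> s k y \<le> s k a} \<union> (lower_region K' J x' \<inter> U)"
  proof
    fix y
    assume "y \<in> lower_region (insert k K') (insert j J) (x'(j := a)) \<inter> B"
    then obtain k' where y: "y \<in> space \<nu>" "y \<in> B" "k' \<in> insert k K'"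
      and below: "\<forall>i\<in>insert j J. s k' y \<le> s k' ((x'(j := a)) i)"
      by (auto simp: lower_region_def)
    show "y \<in> {y\<in>space \<nu>. y \<in> B \<and> s k y \<le> s k a} \<union> (lower_region K' J x' \<inter> U)"
    proof (cases "s k y \<le> s k a")
      case False
      with below have "k' \<in> K'"
        using y(3) by auto
      with below y False \<open>j \<notin> J\<close> show ?thesis
        by (auto simp: lower_region_def U_def split: if_splits)
    qed (use y in auto)
  qed
  then have "measure \<nu> (lower_region (insert k K') (insert j J) (x'(j := a)) \<inter> B)
      \<le> g + measure \<nu> (lower_region K' J x' \<inter> U)"
    using assms(1,2) unfolding U_def g_def
    by (intro order_trans[OF finite_measure_mono measure_Un_le]) auto
  with exceeds show "\<alpha> * measure \<nu> B - g < measure \<nu> (lower_region K' J x' \<inter> U)"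
    by linarith
qed

lemma nn_integral_section_le_upper_power:
  assumes "finite K'" "finite J" "j \<notin> J" and [measurable]: "B \<in> sets \<nu>"
    and atomless: "emeasure \<nu> {y\<in>space \<nu>. s k y = s k a} = 0"
  shows "(\<integral>\<^sup>+ x'. indicator {x \<in> exceedance_set (insert k K') (insert j J) B \<alpha>.
              \<forall>i\<in>insert j J. s k (x j) \<le> s k (x i)} (x'(j := a)) \<partial>PiM J (\<lambda>_. \<nu>))
    \<le> ennreal ((measure \<nu> B - measure \<nu> {y\<in>space \<nu>. y \<in> B \<and> s k y \<le> s k a}) ^ card J)"
proof -
  define U where "U = {y\<in>space \<nu>. y \<in> B \<and> s k a \<le> s k y}"
  have [measurable]: "U \<in> sets \<nu>"
    unfolding U_def by measurable
  have "(\<integral>\<^sup>+ x'. indicator {x \<in> exceedance_set (insert k K') (insert j J) B \<alpha>.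
              \<forall>i\<in>insert j J. s k (x j) \<le> s k (x i)} (x'(j := a)) \<partial>PiM J (\<lambda>_. \<nu>))
      \<le> emeasure (PiM J (\<lambda>_. \<nu>)) (PiE J (\<lambda>_. U))"
  proof (rule nn_integral_indicator_comp_le_emeasure)
    fix x'
    assume "x' \<in> space (PiM J (\<lambda>_. \<nu>))"
      and "x'(j := a) \<in> {x \<in> exceedance_set (insert k K') (insert j J) B \<alpha>. \<forall>i\<in>insert j J. s k (x j) \<le> s k (x i)}"
    with exceedance_set_section(2)[OF assms(1-4) this(2)] show "x' \<in> PiE J (\<lambda>_. U)"
      by (simp add: U_def space_PiM PiE_iff)
  qed (use assms(2) in simp)
  also have "\<dots> = ennreal (measure \<nu> U ^ card J)"
    using assms(2) by (simp add: product.emeasure_PiM emeasure_eq_measure prod_ennreal ennreal_power)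
  finally show ?thesis
    unfolding U_def measure_upper_set[OF atomless assms(4)] .
qed

lemma nn_integral_section_le_rescaled_tail:
  assumes IH: "\<And>B \<alpha>. B \<in> sets \<nu> \<Longrightarrow> 0 \<le> \<alpha> \<Longrightarrow> \<alpha> \<le> 1 \<Longrightarrow>
      emeasure (PiM J (\<lambda>_. \<nu>)) (exceedance_set K' J B \<alpha>)
        \<le> ennreal (measure \<nu> B ^ card J * binomial_lower_tail (card J) (card K') \<alpha>)"
    and "finite K'" "finite J" "j \<notin> J" and [measurable]: "B \<in> sets \<nu>" and "0 \<le> \<alpha>" "\<alpha> \<le> 1"
    and atomless: "emeasure \<nu> {y\<in>space \<nu>. s k y = s k a} = 0"
  defines "b \<equiv> measure \<nu> B" and "g \<equiv> measure \<nu> {y\<in>space \<nu>. y \<in> B \<and> s k y \<le> s k a}"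
  assumes "g < \<alpha> * b"
  shows "(\<integral>\<^sup>+ x'. indicator {x \<in> exceedance_set (insert k K') (insert j J) B \<alpha>.
              \<forall>i\<in>insert j J. s k (x j) \<le> s k (x i)} (x'(j := a)) \<partial>PiM J (\<lambda>_. \<nu>))
    \<le> ennreal ((b - g) ^ card J * binomial_lower_tail (card J) (card K') ((\<alpha> * b - g) / (b - g)))"
proof -
  define U where "U = {y\<in>space \<nu>. y \<in> B \<and> s k a \<le> s k y}"
  define \<alpha>' where "\<alpha>' = (\<alpha> * b - g) / (b - g)"
  have [measurable]: "U \<in> sets \<nu>"
    unfolding U_def by measurable
  have U: "measure \<nu> U = b - g"
    unfolding U_def b_def g_def by (rule measure_upper_set[OF atomless]) simp
  have "0 \<le> g"
    by (simp add: g_def)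
  moreover have "\<alpha> * b \<le> b"
    using \<open>0 \<le> \<alpha>\<close> \<open>\<alpha> \<le> 1\<close> by (simp add: b_def mult_left_le_one_le)
  ultimately have "0 < b - g"
    using \<open>g < \<alpha> * b\<close> by linarith
  with \<open>g < \<alpha> * b\<close> \<open>\<alpha> * b \<le> b\<close> have \<alpha>': "0 \<le> \<alpha>'" "\<alpha>' \<le> 1" "\<alpha>' * measure \<nu> U = \<alpha> * b - g"
    by (auto simp: \<alpha>'_def U field_simps)
  have "(\<integral>\<^sup>+ x'. indicator {x \<in> exceedance_set (insert k K') (insert j J) B \<alpha>.
              \<forall>i\<in>insert j J. s k (x j) \<le> s k (x i)} (x'(j := a)) \<partial>PiM J (\<lambda>_. \<nu>))
      \<le> emeasure (PiM J (\<lambda>_. \<nu>)) (exceedance_set K' J U \<alpha>')"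
  proof (rule nn_integral_indicator_comp_le_emeasure)
    fix x'
    assume "x' \<in> space (PiM J (\<lambda>_. \<nu>))"
      and "x'(j := a) \<in> {x \<in> exceedance_set (insert k K') (insert j J) B \<alpha>. \<forall>i\<in>insert j J. s k (x j) \<le> s k (x i)}"
    with exceedance_set_section(2,3)[OF assms(2-5) this(2)] \<alpha>'(3) show "x' \<in> exceedance_set K' J U \<alpha>'"
      by (simp add: exceedance_set_def U_def b_def g_def)
  qed (use assms(2,3) in simp)
  also have "\<dots> \<le> ennreal (measure \<nu> U ^ card J * binomial_lower_tail (card J) (card K') \<alpha>')"
    using IH \<alpha>' by simp
  finally show ?thesis
    by (simp add: U \<alpha>'_def)
qed

lemma nn_integral_section_le_conditional_tail_bound:
  assumes IH: "\<And>B \<alpha>. B \<in> sets \<nu> \<Longrightarrow> 0 \<le> \<alpha> \<Longrightarrow> \<alpha> \<le> 1 \<Longrightarrow>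
      emeasure (PiM J (\<lambda>_. \<nu>)) (exceedance_set K' J B \<alpha>)
        \<le> ennreal (measure \<nu> B ^ card J * binomial_lower_tail (card J) (card K') \<alpha>)"
    and "finite K'" "finite J" "j \<notin> J" and [measurable]: "B \<in> sets \<nu>" and "0 \<le> \<alpha>" "\<alpha> \<le> 1"
    and atomless: "emeasure \<nu> {y\<in>space \<nu>. s k y = s k a} = 0"
  shows "(\<integral>\<^sup>+ x'. indicator {x \<in> exceedance_set (insert k K') (insert j J) B \<alpha>.
              \<forall>i\<in>insert j J. s k (x j) \<le> s k (x i)} (x'(j := a)) \<partial>PiM J (\<lambda>_. \<nu>))
    \<le> indicator B a * ennreal (conditional_tail_bound (card J) (card K') \<alpha> (measure \<nu> B)
                               (measure \<nu> {y\<in>space \<nu>. y \<in> B \<and> s k y \<le> s k a}))"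
proof (cases "a \<in> B")
  case False
  then have "(\<integral>\<^sup>+ x'. indicator {x \<in> exceedance_set (insert k K') (insert j J) B \<alpha>.
              \<forall>i\<in>insert j J. s k (x j) \<le> s k (x i)} (x'(j := a)) \<partial>PiM J (\<lambda>_. \<nu>))
      \<le> emeasure (PiM J (\<lambda>_. \<nu>)) {}"
    using exceedance_set_section(1)[OF assms(2-5)] by (intro nn_integral_indicator_comp_le_emeasure) blast+
  then show ?thesis
    by simp
next
  case True
  then show ?thesis
    using nn_integral_section_le_rescaled_tail[OF assms] nn_integral_section_le_upper_power[OF assms(2-5,8)]
    by (simp add: conditional_tail_bound_def)
qed

lemma exceedance_set_subset_argmin:
  assumes "finite I" "I \<noteq> {}"
  shows "exceedance_set K I B \<alpha>
       \<subseteq> (\<Union>j\<in>I. {x \<in> exceedance_set K I B \<alpha>. \<forall>i\<in>I. s k (x j) \<le> s k (x i)})"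
proof
  fix x
  assume x: "x \<in> exceedance_set K I B \<alpha>"
  have "Min ((\<lambda>i. s k (x i)) ` I) \<in> (\<lambda>i. s k (x i)) ` I"
    using assms by (intro Min_in) auto
  then obtain j where j: "j \<in> I" "s k (x j) = Min ((\<lambda>i. s k (x i)) ` I)"
    by auto
  have "\<forall>i\<in>I. s k (x j) \<le> s k (x i)"
    unfolding j(2) using assms(1) by (auto intro: Min_le)
  with x j(1) show "x \<in> (\<Union>j\<in>I. {x \<in> exceedance_set K I B \<alpha>. \<forall>i\<in>I. s k (x j) \<le> s k (x i)})"
    by auto
qed

lemma sets_exceedance_set_argmin:
  assumes "finite K" "finite I" "j \<in> I" "B \<in> sets \<nu>"
  shows "{x \<in> exceedance_set K I B \<alpha>. \<forall>i\<in>I. s k (x j) \<le> s k (x i)} \<in> sets (PiM I (\<lambda>_. \<nu>))"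
proof -
  have "{x \<in> exceedance_set K I B \<alpha>. \<forall>i\<in>I. s k (x j) \<le> s k (x i)}
      = exceedance_set K I B \<alpha> \<inter> (\<Inter>i\<in>I. {x \<in> space (PiM I (\<lambda>_. \<nu>)). s k (x j) \<le> s k (x i)})"
    using assms(3) by (auto simp: exceedance_set_def)
  also have "\<dots> \<in> sets (PiM I (\<lambda>_. \<nu>))"
  proof (intro sets.Int sets.finite_INT)
    have "(\<lambda>x. s k (x l)) \<in> borel_measurable (PiM I (\<lambda>_. \<nu>))" if "l \<in> I" for l
      by (rule measurable_compose[OF measurable_component_singleton[OF that] measurable_score])
    then show "{x \<in> space (PiM I (\<lambda>_. \<nu>)). s k (x j) \<le> s k (x i)} \<in> sets (PiM I (\<lambda>_. \<nu>))"
      if "i \<in> I" for i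
      using that assms(3) by (intro borel_measurable_le) auto
  qed (use assms in auto)
  finally show ?thesis .
qed

lemma emeasure_exceedance_set_argmin_le:
  assumes IH: "\<And>B \<alpha>. B \<in> sets \<nu> \<Longrightarrow> 0 \<le> \<alpha> \<Longrightarrow> \<alpha> \<le> 1 \<Longrightarrow>
      emeasure (PiM (I - {j}) (\<lambda>_. \<nu>)) (exceedance_set K' (I - {j}) B \<alpha>)
        \<le> ennreal (measure \<nu> B ^ card (I - {j}) * binomial_lower_tail (card (I - {j})) (card K') \<alpha>)"
    and "finite K'" and atomless: "\<And>t. emeasure \<nu> {y\<in>space \<nu>. s k y = t} = 0"
    and "finite I" "j \<in> I" and [measurable]: "B \<in> sets \<nu>" and "0 \<le> \<alpha>" "\<alpha> \<le> 1"
  shows "emeasure (PiM I (\<lambda>_. \<nu>))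
      {x \<in> exceedance_set (insert k K') I B \<alpha>. \<forall>i\<in>I. s k (x j) \<le> s k (x i)}
    \<le> (\<integral>\<^sup>+ a. indicator B a * ennreal (conditional_tail_bound (card (I - {j})) (card K') \<alpha> (measure \<nu> B)
                                       (measure \<nu> {y\<in>space \<nu>. y \<in> B \<and> s k y \<le> s k a})) \<partial>\<nu>)"
proof -
  define J where "J = I - {j}"
  have I: "I = insert j J" "j \<notin> J" "finite J"
    using assms(4,5) by (auto simp: J_def)
  define E where "E = {x \<in> exceedance_set (insert k K') I B \<alpha>. \<forall>i\<in>I. s k (x j) \<le> s k (x i)}"
  have E_sets: "E \<in> sets (PiM (insert j J) (\<lambda>_. \<nu>))"
    unfolding E_def I(1)[symmetric] using assms(2,4,5) by (intro sets_exceedance_set_argmin) simp_all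
  have "emeasure (PiM I (\<lambda>_. \<nu>)) E = (\<integral>\<^sup>+ x. indicator E x \<partial>PiM (insert j J) (\<lambda>_. \<nu>))"
    using E_sets I(1) by simp
  also have "\<dots> = (\<integral>\<^sup>+ a. (\<integral>\<^sup>+ x'. indicator E (x'(j := a)) \<partial>PiM J (\<lambda>_. \<nu>)) \<partial>\<nu>)"
    using E_sets by (intro product.product_nn_integral_insert_rev[OF I(3,2)] borel_measurable_indicator)
  also have "\<dots> \<le> (\<integral>\<^sup>+ a. indicator B a * ennreal (conditional_tail_bound (card J) (card K') \<alpha> (measure \<nu> B)
                                              (measure \<nu> {y\<in>space \<nu>. y \<in> B \<and> s k y \<le> s k a})) \<partial>\<nu>)"
    unfolding E_def I(1) using IH[folded J_def] I(2,3) assms(2,7,8) atomless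
    by (intro nn_integral_mono nn_integral_section_le_conditional_tail_bound) simp_all
  finally show ?thesis
    unfolding E_def J_def .
qed

lemma emeasure_exceedance_set_insert_le:
  assumes IH: "\<And>J B \<alpha>. finite J \<Longrightarrow> card K' \<le> card J \<Longrightarrow> B \<in> sets \<nu> \<Longrightarrow> 0 \<le> \<alpha> \<Longrightarrow> \<alpha> \<le> 1 \<Longrightarrow>
      emeasure (PiM J (\<lambda>_. \<nu>)) (exceedance_set K' J B \<alpha>)
        \<le> ennreal (measure \<nu> B ^ card J * binomial_lower_tail (card J) (card K') \<alpha>)"
    and "finite K'" "k \<notin> K'" and atomless: "\<And>t. emeasure \<nu> {y\<in>space \<nu>. s k y = t} = 0"
    and "finite I" "card (insert k K') \<le> card I" and [measurable]: "B \<in> sets \<nu>" and "0 \<le> \<alpha>" "\<alpha> \<le> 1"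
  shows "emeasure (PiM I (\<lambda>_. \<nu>)) (exceedance_set (insert k K') I B \<alpha>)
       \<le> ennreal (measure \<nu> B ^ card I * binomial_lower_tail (card I) (card (insert k K')) \<alpha>)"
proof -
  obtain n where n: "card I = Suc n"
    using assms(2,3,6) by (cases "card I") auto
  define E where "E j = {x \<in> exceedance_set (insert k K') I B \<alpha>. \<forall>i\<in>I. s k (x j) \<le> s k (x i)}" for j
  define H where "H g = ennreal (conditional_tail_bound n (card K') \<alpha> (measure \<nu> B) g)" for g
  have [measurable]: "H \<in> borel_measurable borel"
    unfolding H_def conditional_tail_bound_def binomial_lower_tail_def by measurable
  have E_sets: "E j \<in> sets (PiM I (\<lambda>_. \<nu>))" if "j \<in> I" for j
    unfolding E_def using sets_exceedance_set_argmin[of "insert k K'" I j] that assms(2,5,7) by simp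
  have E_bound: "emeasure (PiM I (\<lambda>_. \<nu>)) (E j)
      \<le> (\<integral>\<^sup>+ a. indicator B a * H (measure \<nu> {y\<in>space \<nu>. y \<in> B \<and> s k y \<le> s k a}) \<partial>\<nu>)" if "j \<in> I" for j
  proof -
    have "card (I - {j}) = n" "card K' \<le> card (I - {j})"
      using that n assms(2,3,5,6) by simp_all
    then have "emeasure (PiM (I - {j}) (\<lambda>_. \<nu>)) (exceedance_set K' (I - {j}) B' \<alpha>')
        \<le> ennreal (measure \<nu> B' ^ card (I - {j}) * binomial_lower_tail (card (I - {j})) (card K') \<alpha>')"
      if "B' \<in> sets \<nu>" "0 \<le> \<alpha>'" "\<alpha>' \<le> 1" for B' \<alpha>'
      using assms(5) that by (intro IH) simp_all
    then have "emeasure (PiM I (\<lambda>_. \<nu>)) (E j) \<le> (\<integral>\<^sup>+ a. indicator B a * ennreal (conditional_tail_bound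
        (card (I - {j})) (card K') \<alpha> (measure \<nu> B) (measure \<nu> {y\<in>space \<nu>. y \<in> B \<and> s k y \<le> s k a})) \<partial>\<nu>)"
      using assms(2) atomless assms(5) that assms(7-9) unfolding E_def
      by (rule emeasure_exceedance_set_argmin_le)
    with \<open>card (I - {j}) = n\<close> show ?thesis
      by (simp add: H_def)
  qed
  have "emeasure (PiM I (\<lambda>_. \<nu>)) (exceedance_set (insert k K') I B \<alpha>) \<le> emeasure (PiM I (\<lambda>_. \<nu>)) (\<Union>j\<in>I. E j)"
    unfolding E_def using exceedance_set_subset_argmin[of I] E_sets[unfolded E_def] assms(5) n
    by (intro emeasure_mono sets.finite_UN) force+
  also have "\<dots> \<le> (\<Sum>j\<in>I. emeasure (PiM I (\<lambda>_. \<nu>)) (E j))"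
    using E_sets assms(5) by (intro emeasure_subadditive_finite) auto
  also have "\<dots> \<le> of_nat (card I) * (\<integral>\<^sup>+ a. indicator B a * H (measure \<nu> {y\<in>space \<nu>. y \<in> B \<and> s k y \<le> s k a}) \<partial>\<nu>)"
    using sum_mono[OF E_bound] by simp
  also have "(\<integral>\<^sup>+ a. indicator B a * H (measure \<nu> {y\<in>space \<nu>. y \<in> B \<and> s k y \<le> s k a}) \<partial>\<nu>)
      = (\<integral>\<^sup>+ g. indicator {0..measure \<nu> B} g * H g \<partial>lborel)"
    using atomless by (intro nn_integral_cdf_transform) (auto intro: finite_measure_axioms)
  also have "of_nat (card I) * \<dots> = ennreal (measure \<nu> B ^ card I * binomial_lower_tail (card I) (card (insert k K')) \<alpha>)"
    using n assms(2,3,8,9) nn_integral_conditional_tail_bound[of "measure \<nu> B" \<alpha> n "card K'"]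
    by (simp add: H_def ennreal_of_nat_eq_real_of_nat del: of_nat_Suc)
  finally show ?thesis .
qed

lemma emeasure_exceedance_set_le:
  assumes "finite K" and "\<And>k t. k \<in> K \<Longrightarrow> emeasure \<nu> {y\<in>space \<nu>. s k y = t} = 0"
    and "finite I" "card K \<le> card I" "B \<in> sets \<nu>" "0 \<le> \<alpha>" "\<alpha> \<le> 1"
  shows "emeasure (PiM I (\<lambda>_. \<nu>)) (exceedance_set K I B \<alpha>)
       \<le> ennreal (measure \<nu> B ^ card I * binomial_lower_tail (card I) (card K) \<alpha>)"
  using assms
proof (induction K arbitrary: I B \<alpha> rule: finite_induct)
  case empty
  then show ?case
    by (simp add: exceedance_set_empty)
next
  case (insert k K')
  then show ?case
    by (intro emeasure_exceedance_set_insert_le) auto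
qed

end

section \<open>Breaking ties by randomisation\<close>

text \<open>The \<open>arctan\<close> term makes it strictly
  increasing in \<open>f\<close>, so ties can only come from an atom of \<open>f\<close>, which the second coordinate spreads
  out. It is clamped to \<open>[0, 1]\<close> because the space of the uniform distribution is all of \<open>\<real>\<close>.\<close>

definition randomized_score :: "'a measure \<Rightarrow> ('a \<Rightarrow> real) \<Rightarrow> 'a \<times> real \<Rightarrow> real" where
  "randomized_score M f p = measure M {y \<in> space M. f y < f (fst p)} + arctan (f (fst p))
     + max 0 (min 1 (snd p)) * measure M {y \<in> space M. f y = f (fst p)}"

lemma emeasure_uniform_clamped_affine_level_set:
  fixes c d t :: real
  assumes "0 < d"
  shows "emeasure (uniform_measure lborel {0..1}) {u. c + max 0 (min 1 u) * d = t} = 0"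
proof -
  have [measurable]: "{u. c + max 0 (min 1 u) * d = t} \<in> sets borel"
    by measurable
  have "{0..1} \<inter> {u. c + max 0 (min 1 u) * d = t} \<subseteq> {(t - c) / d}"
    using assms by (auto simp: field_simps)
  then have "emeasure lborel ({0..1} \<inter> {u. c + max 0 (min 1 u) * d = t}) = 0"
    by (metis emeasure_lborel_singleton emeasure_mono le_zero_eq sets_lborel borel_singleton sets.empty_sets)
  then show ?thesis
    by simp
qed

context finite_measure
begin

lemma measurable_randomized_score [measurable]:
  fixes f :: "'a \<Rightarrow> real"
  assumes [measurable]: "f \<in> borel_measurable M" and "sets U = sets borel"
  shows "randomized_score M f \<in> borel_measurable (M \<Otimes>\<^sub>M U)"
proof -
  have [measurable]: "(\<lambda>p. measure M {y \<in> space M. P (f y) (f (fst p))}) \<in> borel_measurable (M \<Otimes>\<^sub>M U)"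
    if [measurable]: "Measurable.pred (borel \<Otimes>\<^sub>M borel) (\<lambda>(a, b). P a b)" for P
    by (rule borel_measurable_measure_Collect) (use measurable_cong_sets[OF refl \<open>sets U = sets borel\<close>] in measurable)
  show ?thesis
    unfolding randomized_score_def using \<open>sets U = sets borel\<close> by measurable
qed

lemma measure_lt_plus_measure_eq:
  fixes f :: "'a \<Rightarrow> real"
  assumes [measurable]: "f \<in> borel_measurable M"
  shows "measure M {y \<in> space M. f y < t} + measure M {y \<in> space M. f y = t} = measure M {y \<in> space M. f y \<le> t}"
proof -
  have "{y \<in> space M. f y \<le> t} = {y \<in> space M. f y < t} \<union> {y \<in> space M. f y = t}"
    by auto
  moreover have "measure M ({y \<in> space M. f y < t} \<union> {y \<in> space M. f y = t})
      = measure M {y \<in> space M. f y < t} + measure M {y \<in> space M. f y = t}"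
    by (rule finite_measure_Union) auto
  ultimately show ?thesis
    by simp
qed

lemma randomized_score_mono:
  fixes f :: "'a \<Rightarrow> real"
  assumes [measurable]: "f \<in> borel_measurable M" and "f (fst p) < f (fst p')"
  shows "randomized_score M f p \<le> randomized_score M f p'"
proof -
  let ?atom = "\<lambda>t. measure M {z \<in> space M. f z = t}"
  have "max 0 (min 1 (snd p)) * ?atom (f (fst p)) \<le> ?atom (f (fst p))"
    by (simp add: mult_left_le_one_le)
  moreover have "measure M {z \<in> space M. f z \<le> f (fst p)} \<le> measure M {z \<in> space M. f z < f (fst p')}"
    using assms(2) by (intro finite_measure_mono) auto
  moreover have "0 \<le> max 0 (min 1 (snd p')) * ?atom (f (fst p'))"
    by simp
  moreover have "arctan (f (fst p)) < arctan (f (fst p'))"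
    using assms(2) by (simp add: arctan_less_iff)
  ultimately show ?thesis
    using measure_lt_plus_measure_eq[OF assms(1), of "f (fst p)"]
    unfolding randomized_score_def by linarith
qed

lemma strict_mono_measure_lt_plus_arctan:
  fixes f :: "'a \<Rightarrow> real"
  assumes [measurable]: "f \<in> borel_measurable M"
  shows "strict_mono (\<lambda>r. measure M {y \<in> space M. f y < r} + arctan r)"
proof (rule strict_monoI)
  fix r r' :: real
  assume "r < r'"
  then have "measure M {y \<in> space M. f y < r} \<le> measure M {y \<in> space M. f y < r'}"
    by (intro finite_measure_mono) auto
  with \<open>r < r'\<close> show "measure M {y \<in> space M. f y < r} + arctan r < measure M {y \<in> space M. f y < r'} + arctan r'"
    by (simp add: arctan_less_iff add_le_less_mono)
qed

lemma emeasure_nonatomic_level_set: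
  fixes f :: "'a \<Rightarrow> real"
  assumes [measurable]: "f \<in> borel_measurable M"
  shows "emeasure M {y \<in> space M. measure M {z \<in> space M. f z < f y} + arctan (f y) = t
                                 \<and> measure M {z \<in> space M. f z = f y} = 0} = 0"
proof -
  define C where "C = {y \<in> space M. measure M {z \<in> space M. f z < f y} + arctan (f y) = t
                                   \<and> measure M {z \<in> space M. f z = f y} = 0}"
  have "emeasure M C = 0"
  proof (cases "C = {}")
    case False
    then obtain y\<^sub>0 where "y\<^sub>0 \<in> C"
      by auto
    have "C \<subseteq> {y \<in> space M. f y = f y\<^sub>0}"
      using \<open>y\<^sub>0 \<in> C\<close> strict_mono_eq[OF strict_mono_measure_lt_plus_arctan[OF assms(1)]] by (auto simp: C_def)
    moreover have "emeasure M {y \<in> space M. f y = f y\<^sub>0} = 0"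
      using \<open>y\<^sub>0 \<in> C\<close> by (simp add: C_def emeasure_eq_measure)
    moreover have "{y \<in> space M. f y = f y\<^sub>0} \<in> sets M"
      by measurable
    ultimately show ?thesis
      by (metis emeasure_mono le_zero_eq)
  qed simp
  then show ?thesis
    by (simp add: C_def)
qed

lemma emeasure_randomized_score_level_set:
  fixes f :: "'a \<Rightarrow> real"
  assumes [measurable]: "f \<in> borel_measurable M"
  defines "U \<equiv> uniform_measure lborel {0..1::real}"
  shows "emeasure (M \<Otimes>\<^sub>M U) {p \<in> space (M \<Otimes>\<^sub>M U). randomized_score M f p = t} = 0"
proof -
  interpret U: prob_space U
    unfolding U_def by (intro prob_space_uniform_measure) auto
  let ?G = "\<lambda>r. measure M {y \<in> space M. f y < r} + arctan r"
  let ?atom = "\<lambda>r. measure M {y \<in> space M. f y = r}"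
  define C where "C = {y \<in> space M. ?G (f y) = t \<and> ?atom (f y) = 0}"
  have [measurable]: "randomized_score M f \<in> borel_measurable (M \<Otimes>\<^sub>M U)"
    by (simp add: U_def)
  have "emeasure (M \<Otimes>\<^sub>M U) {p \<in> space (M \<Otimes>\<^sub>M U). randomized_score M f p = t}
      = (\<integral>\<^sup>+ y. emeasure U (Pair y -` {p \<in> space (M \<Otimes>\<^sub>M U). randomized_score M f p = t}) \<partial>M)"
    by (intro U.emeasure_pair_measure_alt) measurable
  also have "\<dots> \<le> (\<integral>\<^sup>+ y. indicator C y \<partial>M)"
  proof (rule nn_integral_mono)
    fix y
    assume "y \<in> space M"
    then have slice: "Pair y -` {p \<in> space (M \<Otimes>\<^sub>M U). randomized_score M f p = t}
        = {u. ?G (f y) + max 0 (min 1 u) * ?atom (f y) = t}"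
      by (auto simp: randomized_score_def space_pair_measure U_def)
    show "emeasure U (Pair y -` {p \<in> space (M \<Otimes>\<^sub>M U). randomized_score M f p = t}) \<le> indicator C y"
    proof (cases "?atom (f y) = 0")
      case True
      with \<open>y \<in> space M\<close> show ?thesis
        unfolding slice by (cases "y \<in> C") (auto simp: C_def U.emeasure_le_1)
    next
      case False
      then have "0 < ?atom (f y)"
        using measure_nonneg[of M] by (simp add: order_less_le)
      then have "emeasure U {u. ?G (f y) + max 0 (min 1 u) * ?atom (f y) = t} = 0"
        unfolding U_def by (rule emeasure_uniform_clamped_affine_level_set)
      then show ?thesis
        unfolding slice by simp
    qed
  qed
  also have "\<dots> = emeasure M C"
    by (simp add: C_def)
  also have "\<dots> = 0"
    unfolding C_def by (rule emeasure_nonatomic_level_set[OF assms(1)])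
  finally show ?thesis
    by simp
qed

end

lemma emeasure_PiM_vimage_compose_fst:
  assumes "finite I" "prob_space M" "prob_space U" "E \<in> sets (PiM I (\<lambda>_. M))"
  shows "emeasure (PiM I (\<lambda>_. M)) E
       = emeasure (PiM I (\<lambda>_. M \<Otimes>\<^sub>M U)) (compose I fst -` E \<inter> space (PiM I (\<lambda>_. M \<Otimes>\<^sub>M U)))"
proof -
  have "distr (PiM I (\<lambda>_. M \<Otimes>\<^sub>M U)) (PiM I (\<lambda>_. M)) (compose I fst) = PiM I (\<lambda>_. distr (M \<Otimes>\<^sub>M U) M fst)"
    using assms by (intro distr_PiM_finite_prob_space' prob_space_pair) auto
  also have "distr (M \<Otimes>\<^sub>M U) M fst = M"
    using assms(3) by (rule prob_space.distr_pair_fst)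
  finally have "distr (PiM I (\<lambda>_. M \<Otimes>\<^sub>M U)) (PiM I (\<lambda>_. M)) (compose I fst) = PiM I (\<lambda>_. M)" .
  moreover have "compose I fst \<in> PiM I (\<lambda>_. M \<Otimes>\<^sub>M U) \<rightarrow>\<^sub>M PiM I (\<lambda>_. M)"
    unfolding compose_def by measurable
  ultimately show ?thesis
    using emeasure_distr[of "compose I fst" "PiM I (\<lambda>_. M \<Otimes>\<^sub>M U)" "PiM I (\<lambda>_. M)" E] assms(4)
    by simp
qed

lemma (in finite_measure) sets_strict_lower_mass_exceeds:
  fixes f :: "nat \<Rightarrow> 'a \<Rightarrow> real"
  assumes [measurable]: "\<And>k. f k \<in> borel_measurable M" and "finite K" "finite I"
  shows "{xs \<in> space (PiM I (\<lambda>_. M)). \<alpha> < measure M {y \<in> space M. \<exists>k\<in>K. \<forall>i\<in>I. f k y < f k (xs i)}}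
       \<in> sets (PiM I (\<lambda>_. M))"
proof -
  have "(\<lambda>xs. measure M {y \<in> space M. \<exists>k\<in>K. \<forall>i\<in>I. f k y < f k (xs i)}) \<in> borel_measurable (PiM I (\<lambda>_. M))"
    using assms(2,3) by (intro borel_measurable_measure_Collect) measurable
  then show ?thesis
    by measurable
qed

context prob_space
begin

lemma measure_strict_lower_le_randomized:
  fixes f :: "nat \<Rightarrow> 'a \<Rightarrow> real" and U :: "real measure"
  assumes "prob_space U" and [measurable]: "\<And>k. f k \<in> borel_measurable M" and "finite K" "finite I"
    and "sets U = sets borel"
  shows "measure M {y \<in> space M. \<exists>k\<in>K. \<forall>i\<in>I. f k y < f k (fst (x i))}
    \<le> measure (M \<Otimes>\<^sub>M U)
        {p \<in> space (M \<Otimes>\<^sub>M U). \<exists>k\<in>K. \<forall>i\<in>I. randomized_score M (f k) p \<le> randomized_score M (f k) (x i)}"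
    (is "measure M ?V \<le> measure _ ?R")
proof -
  interpret U: prob_space U by fact
  interpret \<nu>: prob_space "M \<Otimes>\<^sub>M U"
    by (intro prob_space_pair prob_space_axioms U.prob_space_axioms)
  have [measurable]: "?V \<in> sets M" "?R \<in> sets (M \<Otimes>\<^sub>M U)"
    using assms(3-5) by measurable
  have "?V \<times> space U \<subseteq> ?R"
  proof
    fix p
    assume p: "p \<in> ?V \<times> space U"
    then obtain k where "k \<in> K" "\<forall>i\<in>I. f k (fst p) < f k (fst (x i))"
      by auto
    then have "\<forall>i\<in>I. randomized_score M (f k) p \<le> randomized_score M (f k) (x i)"
      using randomized_score_mono[OF assms(2)] by blast
    moreover have "p \<in> space (M \<Otimes>\<^sub>M U)"
      using p by (auto simp: space_pair_measure)
    ultimately show "p \<in> ?R"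
      using \<open>k \<in> K\<close> by blast
  qed
  then have "measure (M \<Otimes>\<^sub>M U) (?V \<times> space U) \<le> measure (M \<Otimes>\<^sub>M U) ?R"
    by (intro \<nu>.finite_measure_mono) auto
  then show ?thesis
    by (simp add: measure_def U.emeasure_pair_measure_Times U.emeasure_space_1)
qed

theorem emeasure_strict_lower_region_exceeds_le:
  fixes f :: "nat \<Rightarrow> 'a \<Rightarrow> real" and I :: "nat set"
  assumes [measurable]: "\<And>k. f k \<in> borel_measurable M"
    and "finite K" "finite I" "card K \<le> card I" "0 \<le> \<alpha>" "\<alpha> \<le> 1"
  shows "emeasure (PiM I (\<lambda>_. M))
      {xs \<in> space (PiM I (\<lambda>_. M)). \<alpha> < measure M {y \<in> space M. \<exists>k\<in>K. \<forall>i\<in>I. f k y < f k (xs i)}}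
    \<le> ennreal (binomial_lower_tail (card I) (card K) \<alpha>)"
proof -
  define U where "U = uniform_measure lborel {0..1::real}"
  interpret U: prob_space U
    unfolding U_def by (intro prob_space_uniform_measure) auto
  interpret \<nu>: prob_space "M \<Otimes>\<^sub>M U"
    by (intro prob_space_pair prob_space_axioms U.prob_space_axioms)
  have sets_U: "sets U = sets borel"
    by (simp add: U_def)
  define s where "s k = randomized_score M (f k)" for k
  interpret finite_measure_scores "M \<Otimes>\<^sub>M U" s
    by unfold_locales (simp add: s_def sets_U)
  let ?V = "\<lambda>xs. {y \<in> space M. \<exists>k\<in>K. \<forall>i\<in>I. f k y < f k (xs i)}"
  define E where "E = {xs \<in> space (PiM I (\<lambda>_. M)). \<alpha> < measure M (?V xs)}"
  have E_sets: "E \<in> sets (PiM I (\<lambda>_. M))"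
    unfolding E_def using sets_strict_lower_mass_exceeds[OF assms(1-3)] .
  have lifted: "compose I fst -` E \<inter> space (PiM I (\<lambda>_. M \<Otimes>\<^sub>M U)) \<subseteq> exceedance_set K I (space (M \<Otimes>\<^sub>M U)) \<alpha>"
  proof
    fix x
    assume x: "x \<in> compose I fst -` E \<inter> space (PiM I (\<lambda>_. M \<Otimes>\<^sub>M U))"
    have "?V (compose I fst x) = {y \<in> space M. \<exists>k\<in>K. \<forall>i\<in>I. f k y < f k (fst (x i))}"
      by (auto simp: compose_def)
    also have "measure M \<dots> \<le> measure (M \<Otimes>\<^sub>M U) (lower_region K I x \<inter> space (M \<Otimes>\<^sub>M U))"
      using measure_strict_lower_le_randomized[where f=f and K=K and I=I and x=x and U=U] U.prob_space_axioms
        assms(2,3) sets_U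
      unfolding lower_region_def s_def by (simp add: Int_absorb2)
    finally show "x \<in> exceedance_set K I (space (M \<Otimes>\<^sub>M U)) \<alpha>"
      using x by (auto simp: E_def exceedance_set_def \<nu>.prob_space space_PiM)
  qed
  have "emeasure (PiM I (\<lambda>_. M)) E = emeasure (PiM I (\<lambda>_. M \<Otimes>\<^sub>M U)) (compose I fst -` E \<inter> space (PiM I (\<lambda>_. M \<Otimes>\<^sub>M U)))"
    by (rule emeasure_PiM_vimage_compose_fst[OF assms(3) prob_space_axioms U.prob_space_axioms E_sets])
  also have "\<dots> \<le> emeasure (PiM I (\<lambda>_. M \<Otimes>\<^sub>M U)) (exceedance_set K I (space (M \<Otimes>\<^sub>M U)) \<alpha>)"
    using lifted assms(2,3) by (intro emeasure_mono) auto
  also have "\<dots> \<le> ennreal (binomial_lower_tail (card I) (card K) \<alpha>)"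
  proof -
    have "emeasure (M \<Otimes>\<^sub>M U) {p \<in> space (M \<Otimes>\<^sub>M U). s k p = t} = 0" for k t
      unfolding s_def U_def by (rule emeasure_randomized_score_level_set) simp
    from emeasure_exceedance_set_le[OF assms(2) this assms(3,4) sets.top assms(5,6)] show ?thesis
      by (simp add: \<nu>.prob_space)
  qed
  finally show ?thesis
    unfolding E_def .
qed

end

section \<open>Depth regions\<close>

lemma minent_is_minimum:
  fixes f :: "'a \<Rightarrow> real"
  assumes "0 < N" and "\<And>i. i < N \<Longrightarrow> xs i \<in> A"
    and ord: "\<And>x y. x \<in> A \<Longrightarrow> y \<in> A \<Longrightarrow> f x \<le> f y \<Longrightarrow> le k x y"
  shows "minent le k N xs \<in> xs ` {..<N}" and "\<forall>i<N. le k (minent le k N xs) (xs i)"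
proof -
  have "Min ((\<lambda>i. f (xs i)) ` {..<N}) \<in> (\<lambda>i. f (xs i)) ` {..<N}"
    using assms(1) by (intro Min_in) auto
  then obtain j where j: "j < N" "f (xs j) = Min ((\<lambda>i. f (xs i)) ` {..<N})"
    by auto
  then have "\<forall>i<N. le k (xs j) (xs i)"
    using assms(2) by (auto intro!: ord)
  with j(1) have "\<exists>y. y \<in> xs ` {..<N} \<and> (\<forall>i<N. le k y (xs i))"
    by auto
  then have "minent le k N xs \<in> xs ` {..<N} \<and> (\<forall>i<N. le k (minent le k N xs) (xs i))"
    unfolding minent_def by (rule someI_ex)
  then show "minent le k N xs \<in> xs ` {..<N}" and "\<forall>i<N. le k (minent le k N xs) (xs i)"
    by auto
qed

lemma compl_depth_region_subset:
  fixes \<tau> :: "nat \<Rightarrow> 'a \<Rightarrow> real" and m :: nat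
  assumes "m \<le> N" and xs: "\<And>i. i < N \<Longrightarrow> xs i \<in> A"
    and trans: "\<And>k x y z. k \<in> {1..m} \<Longrightarrow> x \<in> A \<Longrightarrow> y \<in> A \<Longrightarrow> z \<in> A
                 \<Longrightarrow> le k x y \<Longrightarrow> le k y z \<Longrightarrow> le k x z"
    and ord: "\<And>k x y. k \<in> {1..m} \<Longrightarrow> x \<in> A \<Longrightarrow> y \<in> A \<Longrightarrow> \<tau> k x \<le> \<tau> k y \<Longrightarrow> le k x y"
  shows "A - {x \<in> A. \<forall>k\<in>{1..m}. le k (minent le k N xs) x}
       \<subseteq> {y \<in> A. \<exists>k\<in>{1..m}. \<forall>i\<in>{..<N}. \<tau> k y < \<tau> k (xs i)}"
proof
  fix y
  assume "y \<in> A - {x \<in> A. \<forall>k\<in>{1..m}. le k (minent le k N xs) x}"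
  then obtain k where y: "y \<in> A" and k: "k \<in> {1..m}" and not_above: "\<not> le k (minent le k N xs) y"
    by auto
  have "0 < N"
    using k \<open>m \<le> N\<close> by auto
  note minimum = minent_is_minimum[where f="\<tau> k" and le=le and k=k and xs=xs and A=A, OF this xs ord[OF k]]
  have "\<tau> k y < \<tau> k (xs i)" if "i < N" for i
  proof (rule ccontr)
    assume "\<not> \<tau> k y < \<tau> k (xs i)"
    then have "le k (xs i) y"
      using ord[OF k xs[OF that] y] by simp
    moreover have "minent le k N xs \<in> A"
      using minimum(1) xs by auto
    ultimately have "le k (minent le k N xs) y"
      using trans[OF k _ xs[OF that] y] minimum(2) that by blast
    with not_above show False ..
  qed
  with y k show "y \<in> {y \<in> A. \<exists>k\<in>{1..m}. \<forall>i\<in>{..<N}. \<tau> k y < \<tau> k (xs i)}"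
    by blast
qed

lemma sets_depth_region:
  fixes le :: "nat \<Rightarrow> 'a \<Rightarrow> 'a \<Rightarrow> bool" and m :: nat
  assumes h: "\<And>k. k \<in> {1..m} \<Longrightarrow> h k \<in> space M"
    and total: "\<And>k x y. k \<in> {1..m} \<Longrightarrow> x \<in> space M \<Longrightarrow> y \<in> space M \<Longrightarrow> le k x y \<or> le k y x"
    and meas_eq: "\<And>k x. k \<in> {1..m} \<Longrightarrow> x \<in> space M
                   \<Longrightarrow> {y \<in> space M. le k y x \<and> le k x y} \<in> sets M"
    and meas_le: "\<And>k x. k \<in> {1..m} \<Longrightarrow> x \<in> space M \<Longrightarrow> {y \<in> space M. le k y x} \<in> sets M"
  shows "{x \<in> space M. \<forall>k\<in>{1..m}. le k (h k) x} \<in> sets M"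
proof (rule sets.sets_Collect_finite_All)
  fix k
  assume k: "k \<in> {1..m}"
  have "{x \<in> space M. le k (h k) x}
      = space M - ({y \<in> space M. le k y (h k)} - {y \<in> space M. le k y (h k) \<and> le k (h k) y})"
    using total[OF k] h[OF k] by blast
  then show "{x \<in> space M. le k (h k) x} \<in> sets M"
    using meas_le[OF k h[OF k]] meas_eq[OF k h[OF k]] by auto
qed auto

lemma (in prob_space) compl_depthD_le_strict_lower_mass:
  fixes \<tau> :: "nat \<Rightarrow> 'a \<Rightarrow> real" and m :: nat
  assumes "m \<le> N" and "xs \<in> space (PiM {..<N} (\<lambda>_. M))"
    and trans: "\<And>k x y z. k \<in> {1..m} \<Longrightarrow> x \<in> space M \<Longrightarrow> y \<in> space M \<Longrightarrow> z \<in> space M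
                 \<Longrightarrow> le k x y \<Longrightarrow> le k y z \<Longrightarrow> le k x z"
    and total: "\<And>k x y. k \<in> {1..m} \<Longrightarrow> x \<in> space M \<Longrightarrow> y \<in> space M \<Longrightarrow> le k x y \<or> le k y x"
    and meas_eq: "\<And>k x. k \<in> {1..m} \<Longrightarrow> x \<in> space M
                   \<Longrightarrow> {y \<in> space M. le k y x \<and> le k x y} \<in> sets M"
    and meas_le: "\<And>k x. k \<in> {1..m} \<Longrightarrow> x \<in> space M \<Longrightarrow> {y \<in> space M. le k y x} \<in> sets M"
    and [measurable]: "\<And>k. \<tau> k \<in> borel_measurable M"
    and ord: "\<And>k x y. k \<in> {1..m} \<Longrightarrow> x \<in> space M \<Longrightarrow> y \<in> space M \<Longrightarrow> \<tau> k x \<le> \<tau> k y \<Longrightarrow> le k x y"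
  shows "1 - depthD M le m N xs \<le> prob {y \<in> space M. \<exists>k\<in>{1..m}. \<forall>i\<in>{..<N}. \<tau> k y < \<tau> k (xs i)}"
proof -
  let ?S = "{x \<in> space M. \<forall>k\<in>{1..m}. le k (minent le k N xs) x}"
  have xs: "\<And>i. i < N \<Longrightarrow> xs i \<in> space M"
    using assms(2) by (auto simp: space_PiM PiE_iff)
  have "minent le k N xs \<in> space M" if "k \<in> {1..m}" for k
    using minent_is_minimum(1)[of N xs "space M" "\<tau> k" le k] that \<open>m \<le> N\<close> xs ord by fastforce
  then have "?S \<in> sets M"
    by (rule sets_depth_region[OF _ total meas_eq meas_le])
  then have "1 - depthD M le m N xs = prob (space M - ?S)"
    by (simp add: depthD_def prob_compl)
  also have "\<dots> \<le> prob {y \<in> space M. \<exists>k\<in>{1..m}. \<forall>i\<in>{..<N}. \<tau> k y < \<tau> k (xs i)}"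
    using compl_depth_region_subset[where A="space M" and xs=xs and le=le and \<tau>=\<tau>, OF \<open>m \<le> N\<close> xs trans ord]
    by (intro finite_measure_mono) auto
  finally show ?thesis .
qed

theorem corollaryA3:
  fixes M :: "'a measure" and le :: "nat \<Rightarrow> 'a \<Rightarrow> 'a \<Rightarrow> bool"
    and m N :: nat and \<alpha> :: real and \<tau> :: "nat \<Rightarrow> 'a \<Rightarrow> real"
  assumes "prob_space M"
    and refl: "\<And>k x. k \<in> {1..m} \<Longrightarrow> x \<in> space M \<Longrightarrow> le k x x"
    and trans: "\<And>k x y z. k \<in> {1..m} \<Longrightarrow> x \<in> space M \<Longrightarrow> y \<in> space M \<Longrightarrow> z \<in> space M
                 \<Longrightarrow> le k x y \<Longrightarrow> le k y z \<Longrightarrow> le k x z"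
    and total: "\<And>k x y. k \<in> {1..m} \<Longrightarrow> x \<in> space M \<Longrightarrow> y \<in> space M \<Longrightarrow> le k x y \<or> le k y x"
    and meas_eq: "\<And>k x. k \<in> {1..m} \<Longrightarrow> x \<in> space M
                   \<Longrightarrow> {y \<in> space M. le k y x \<and> le k x y} \<in> sets M"
    and meas_le: "\<And>k x. k \<in> {1..m} \<Longrightarrow> x \<in> space M \<Longrightarrow> {y \<in> space M. le k y x} \<in> sets M"
    and "N \<ge> m"
    and "0 \<le> \<alpha>" and "\<alpha> \<le> 1"
    and tau_rv: "\<And>k. k \<in> {1..m} \<Longrightarrow> \<tau> k \<in> borel_measurable M"
    and tau_ord: "\<And>k x y. k \<in> {1..m} \<Longrightarrow> x \<in> space M \<Longrightarrow> y \<in> space M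
                   \<Longrightarrow> \<tau> k x \<le> \<tau> k y \<Longrightarrow> le k x y"
  shows "outer_measure_of (completion (PiM {..<N} (\<lambda>_. M)))
           {xs \<in> space (PiM {..<N} (\<lambda>_. M)). depthD M le m N xs < 1 - \<alpha>}
         \<le> ennreal (\<Sum>k = 0..<m. real (N choose k) * \<alpha> ^ k * (1 - \<alpha>) ^ (N - k))"
proof -
  \<comment> \<open>\<open>refl\<close> is not used: it is the case \<open>x = y\<close> of \<open>tau_ord\<close>.\<close>
  interpret prob_space M by fact
  define \<tau>' where "\<tau>' k = (if k \<in> {1..m} then \<tau> k else (\<lambda>_. 0))" for k
  have \<tau>'_rv: "\<tau>' k \<in> borel_measurable M" for k
    using tau_rv by (simp add: \<tau>'_def)
  have \<tau>'_ord: "\<tau>' k x \<le> \<tau>' k y \<Longrightarrow> le k x y" if "k \<in> {1..m}" "x \<in> space M" "y \<in> space M" for k x y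
    using tau_ord[OF that] that(1) by (simp add: \<tau>'_def)
  let ?P = "PiM {..<N} (\<lambda>_. M)"
  \<comment> \<open>The event \<open>depthD < 1 - \<alpha>\<close> need not be measurable; it is covered by the measurable \<open>?E\<close>.\<close>
  let ?E = "{xs \<in> space ?P. \<alpha> < prob {y \<in> space M. \<exists>k\<in>{1..m}. \<forall>i\<in>{..<N}. \<tau>' k y < \<tau>' k (xs i)}}"
  have E_sets: "?E \<in> sets ?P"
    by (rule sets_strict_lower_mass_exceeds[OF \<tau>'_rv]) simp_all
  have compl_depth: "1 - depthD M le m N xs \<le> prob {y \<in> space M. \<exists>k\<in>{1..m}. \<forall>i\<in>{..<N}. \<tau>' k y < \<tau>' k (xs i)}"
    if "xs \<in> space ?P" for xs
    using \<open>N \<ge> m\<close> that trans total meas_eq meas_le \<tau>'_rv \<tau>'_ord by (rule compl_depthD_le_strict_lower_mass)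
  have "{xs \<in> space ?P. depthD M le m N xs < 1 - \<alpha>} \<subseteq> ?E"
  proof
    fix xs
    assume "xs \<in> {xs \<in> space ?P. depthD M le m N xs < 1 - \<alpha>}"
    with compl_depth[of xs] show "xs \<in> ?E"
      by auto
  qed
  then have "outer_measure_of (completion ?P) {xs \<in> space ?P. depthD M le m N xs < 1 - \<alpha>}
      \<le> outer_measure_of (completion ?P) ?E"
    by (rule outer_measure_of_mono)
  also have "\<dots> = emeasure ?P ?E"
    using E_sets by simp
  also have "\<dots> \<le> ennreal (binomial_lower_tail N m \<alpha>)"
    using emeasure_strict_lower_region_exceeds_le[OF \<tau>'_rv, of "{1..m}" "{..<N}" \<alpha>] assms(7-9) by simp
  finally show ?thesis
    unfolding binomial_lower_tail_def .
qed

end
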